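(* Let $G$ be a finitely generated infinite group and let $V$ be a finite-dimensional vector space. Let $\tau\in\mathrm{LNUCA}_c(G,V)$ be stably injective and let $\Gamma=\tau(V^G)$. Then there exists a finite subset $N\subset G$ such that for every $d\in\Gamma$ and every $g\in G$, the element $\tau^{-1}(d)(g)\in V$ depends only on the restriction $d\vert_{gN}$.
   Context: For $g\in G$ and $x\in V^G$, $(gx)(h)=x(g^{-1}h)$. For finite $M\subset G$, $S=\mathcal{L}(V^M,V)$ and $s\in S^G$, $\sigma_s\colon V^G\to V^G$ is $\sigma_s(x)(g)=s(g)((g^{-1}x)\vert_M)$. $\mathrm{LNUCA}_c(G,V)$ is the set of maps $\sigma_s$ with $M$ finite and $s$ constant outside some finite subset of $G$. For $s\in S^G$, $\Sigma(s)$ is the closure of $\{gs:g\in G\}$ in $S^G$ for the prodiscrete topology (with $(gs)(h)=s(g^{-1}h)$). $\tau=\sigma_s$ is stably injective if $\sigma_p$ is injective for every $p\in\Sigma(s)$ (in particular $\tau$ is injective, so $\tau^{-1}(d)$ is well defined for $d\in\Gamma$). *)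

theory Defs
  imports "HOL-Analysis.Analysis" "HOL-Library.Function_Algebras"
begin

text \<open>Groups are written additively (type class group_add, not necessarily
commutative): g h is written g + h and g inverse is written - g.\<close>

inductive_set gen_subgroup :: "'g::group_add set \<Rightarrow> 'g set" for A where
  gen_zero: "0 \<in> gen_subgroup A"
| gen_base: "a \<in> A \<Longrightarrow> a \<in> gen_subgroup A"
| gen_add: "x \<in> gen_subgroup A \<Longrightarrow> y \<in> gen_subgroup A \<Longrightarrow> x + y \<in> gen_subgroup A"
| gen_uminus: "x \<in> gen_subgroup A \<Longrightarrow> - x \<in> gen_subgroup A"

definition finitely_generated_group :: "'g::group_add itself \<Rightarrow> bool" where
  "finitely_generated_group _ \<longleftrightarrow> (\<exists>A::'g set. finite A \<and> gen_subgroup A = UNIV)"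

definition shift :: "'g::group_add \<Rightarrow> ('g \<Rightarrow> 'a) \<Rightarrow> ('g \<Rightarrow> 'a)" where
  "shift g x = (\<lambda>h. x (- g + h))"

text \<open>Restriction x|_M, representing V^M as configurations vanishing outside M.\<close>
definition restr :: "'g set \<Rightarrow> ('g \<Rightarrow> 'v::zero) \<Rightarrow> ('g \<Rightarrow> 'v)" where
  "restr M x = (\<lambda>h. if h \<in> M then x h else 0)"

text \<open>S = L(V^M, V): linear maps on configurations that only depend on the
restriction to M (these are in bijection with linear maps V^M \<rightarrow> V).\<close>
definition lin_maps :: "('k::field \<Rightarrow> 'v::ab_group_add \<Rightarrow> 'v) \<Rightarrow> 'g set
    \<Rightarrow> ((('g \<Rightarrow> 'v) \<Rightarrow> 'v) set)" where
  "lin_maps sc M = {f. Vector_Spaces.linear (\<lambda>c x h. sc c (x h)) sc f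
                          \<and> (\<forall>x. f x = f (restr M x))}"

definition sigma :: "'g::group_add set \<Rightarrow> ('g \<Rightarrow> ('g \<Rightarrow> 'v::zero) \<Rightarrow> 'v)
    \<Rightarrow> ('g \<Rightarrow> 'v) \<Rightarrow> ('g \<Rightarrow> 'v)" where
  "sigma M s x = (\<lambda>g. s g (restr M (shift (- g) x)))"

definition orbit_closure :: "'a set \<Rightarrow> ('g::group_add \<Rightarrow> 'a) \<Rightarrow> ('g \<Rightarrow> 'a) set" where
  "orbit_closure S s = (product_topology (\<lambda>_. discrete_topology S) UNIV)
                          closure_of (range (\<lambda>g. shift g s))"

definition stably_injective ::
  "('k::field \<Rightarrow> 'v::ab_group_add \<Rightarrow> 'v) \<Rightarrow> 'g::group_add set \<Rightarrow> ('g \<Rightarrow> ('g \<Rightarrow> 'v) \<Rightarrow> 'v) \<Rightarrow> bool" where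
  "stably_injective sc M s \<longleftrightarrow> (\<forall>p \<in> orbit_closure (lin_maps sc M) s. inj (sigma M p))"

end

theory Submission
  imports Defs
begin

(* Every translate of s, and the constant family c that s takes outside a finite set, lies in
   the orbit closure of s; so stable injectivity makes all the corresponding linear cellular
   automata injective.

   For a single injective sigma_p over a countable group with finite-dimensional alphabet, a
   compactness argument yields a finite N such that x(0) = 0 whenever sigma_p(x) vanishes on N.
   Otherwise, exhausting G by finite sets B_r, each space X_r of configurations whose image
   vanishes on B_r contains a configuration that is nonzero at 0. On a fixed finite window the
   restrictions of the X_r form a decreasing chain of finite-dimensional spaces, which
   stabilizes; compatible elements of the stable restrictions glue to a configuration that is
   nonzero at 0 and lies in the kernel of sigma_p.

   Only finitely many translates of s differ from c on the set N_c obtained for c, so the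
   union of N_c with the sets obtained for these translates works at every g, and linearity
   turns this into the statement. *)

lemma orbit_closureI:
  assumes sS: "\<And>g. s g \<in> S" and pS: "\<And>h. p h \<in> S"
    and agree: "\<And>F. finite F \<Longrightarrow> \<exists>g. \<forall>i\<in>F. shift g s i = p i"
  shows "p \<in> orbit_closure S s"
  unfolding orbit_closure_def closure_of_def
proof (intro CollectI conjI allI impI)
  show "p \<in> topspace (product_topology (\<lambda>_. discrete_topology S) UNIV)"
    using pS by (simp add: PiE_UNIV_domain)
next
  fix T assume "p \<in> T \<and> openin (product_topology (\<lambda>_. discrete_topology S) UNIV) T"
  then obtain U where U: "finite {i. U i \<noteq> S}" "p \<in> Pi\<^sub>E UNIV U" "Pi\<^sub>E UNIV U \<subseteq> T"
    unfolding openin_product_topology_alt by force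
  obtain g where g: "\<forall>i\<in>{i. U i \<noteq> S}. shift g s i = p i"
    using agree[OF U(1)] by blast
  have "shift g s i \<in> U i" for i
    using g U(2) sS by (cases "U i = S") (auto simp: shift_def PiE_UNIV_domain)
  then have "shift g s \<in> Pi\<^sub>E UNIV U"
    by (simp add: PiE_UNIV_domain)
  then show "\<exists>y\<in>range (\<lambda>g. shift g s). y \<in> T"
    using U(3) by blast
qed

lemma orbit_closure_values: "p \<in> orbit_closure S s \<Longrightarrow> p g \<in> S"
  using closure_of_subset_topspace[of "product_topology (\<lambda>_. discrete_topology S) UNIV"]
  by (force simp: orbit_closure_def PiE_UNIV_domain)

lemma translate_in_orbit_closure:
  assumes "\<And>g. s g \<in> S"
  shows "(\<lambda>h. s (g + h)) \<in> orbit_closure S s"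
  by (rule orbit_closureI) (use assms in \<open>auto intro!: exI[of _ "- g"] simp: shift_def\<close>)

lemma const_in_orbit_closure:
  assumes inf: "infinite (UNIV :: 'g::group_add set)"
    and S: "\<And>g. s g \<in> S" and E: "finite E" and const: "\<And>g. g \<notin> E \<Longrightarrow> s g = c"
  shows "(\<lambda>_::'g. c) \<in> orbit_closure S s"
proof (rule orbit_closureI[OF S])
  obtain g where "g \<notin> E"
    using inf E ex_new_if_finite by blast
  then show "c \<in> S"
    using S const by metis
next
  fix F :: "'g set" assume "finite F"
  then have "finite (\<Union>i\<in>F. (\<lambda>e. i + - e) ` E)"
    using E by simp
  then obtain g where g: "g \<notin> (\<Union>i\<in>F. (\<lambda>e. i + - e) ` E)"
    using inf ex_new_if_finite by blast
  have "- g + i \<notin> E" if "i \<in> F" for i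
  proof
    assume "- g + i \<in> E"
    moreover have "g = i + - (- g + i)"
      by (simp add: minus_add add.assoc)
    ultimately show False
      using g that by blast
  qed
  then show "\<exists>g. \<forall>i\<in>F. shift g s i = c"
    using const by (auto simp: shift_def)
qed

lemma sum_list_rev_map_uminus:
  "sum_list (rev (map uminus xs)) = - sum_list (xs :: 'g::group_add list)"
  by (induction xs) (auto simp: minus_add)

lemma countable_UNIV_if_finitely_generated:
  assumes "finitely_generated_group TYPE('g::group_add)"
  shows "countable (UNIV :: 'g set)"
proof -
  obtain A :: "'g set" where A: "finite A" "gen_subgroup A = UNIV"
    using assms unfolding finitely_generated_group_def by blast
  define words where "words = lists (A \<union> uminus ` A)"
  have "x \<in> sum_list ` words" if "x \<in> gen_subgroup A" for x
    using that
  proof (induction rule: gen_subgroup.induct)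
    case gen_zero
    show ?case
      by (rule image_eqI[of _ _ "[]"]) (auto simp: words_def)
  next
    case (gen_base a)
    then show ?case
      by (intro image_eqI[of _ _ "[a]"]) (auto simp: words_def)
  next
    case (gen_add x y)
    then obtain l1 l2 where "l1 \<in> words" "l2 \<in> words" "x = sum_list l1" "y = sum_list l2"
      by blast
    then show ?case
      by (intro image_eqI[of _ _ "l1 @ l2"]) (auto simp: words_def)
  next
    case (gen_uminus x)
    then obtain l where l: "l \<in> words" "x = sum_list l"
      by blast
    have "rev (map uminus l) \<in> words"
      using l(1) by (auto simp: words_def image_iff) (metis minus_minus)
    then show ?case
      using l(2) sum_list_rev_map_uminus[of l] by (intro image_eqI[of _ _ "rev (map uminus l)"]) auto
  qed
  then have "UNIV \<subseteq> sum_list ` words"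
    using A(2) by blast
  moreover have "countable (sum_list ` words)"
    using A(1) unfolding words_def by (intro countable_image countable_lists countable_finite) auto
  ultimately show ?thesis
    using countable_subset by blast
qed

context vector_space
begin

lemma subspace_eq_if_dim_le:
  assumes "subspace S" "S \<subseteq> T" "T \<subseteq> span W" "finite W" "dim T \<le> dim S"
  shows "S = T"
proof -
  obtain Bs where Bs: "Bs \<subseteq> S" "independent Bs" "S \<subseteq> span Bs" "card Bs = dim S"
    using basis_exists by blast
  obtain Bt where Bt: "Bt \<subseteq> T" "independent Bt" "T \<subseteq> span Bt" "card Bt = dim T"
    using basis_exists by blast
  have fin_Bs: "finite Bs"
    using independent_span_bound[OF assms(4) Bs(2)] Bs(1) assms(2,3) by blast
  have fin_Bt: "finite Bt"
    using independent_span_bound[OF assms(4) Bt(2)] Bt(1) assms(3) by blast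
  have "T \<subseteq> span Bs"
  proof
    fix t assume t: "t \<in> T"
    show "t \<in> span Bs"
    proof (rule ccontr)
      assume t_new: "t \<notin> span Bs"
      have "t \<notin> Bs"
        using t_new span_base by blast
      then have "card (insert t Bs) = card Bs + 1"
        using fin_Bs by simp
      moreover have "card (insert t Bs) \<le> card Bt"
      proof -
        have "insert t Bs \<subseteq> span Bt"
          using Bt(3) Bs(1) assms(2) t by blast
        then show ?thesis
          using independent_span_bound[OF fin_Bt independent_insertI[OF t_new Bs(2)]] by blast
      qed
      ultimately show False
        using Bs(4) Bt(4) assms(5) by simp
    qed
  qed
  then show ?thesis
    using span_minimal[OF Bs(1) assms(1)] assms(2) by blast
qed

lemma decseq_subspaces_stabilize:
  assumes "\<And>r. subspace (S r)" "decseq S" "\<And>r. S r \<subseteq> span W" "finite W"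
  shows "\<exists>R. \<forall>r\<ge>R. S r = S R"
proof -
  obtain R where R: "\<And>r. dim (S R) \<le> dim (S r)"
    using ex_has_least_nat[of "\<lambda>_. True" 0 "\<lambda>r. dim (S r)"] by blast
  have "S r = S R" if "R \<le> r" for r
    using subspace_eq_if_dim_le[OF assms(1) decseqD[OF assms(2) that] assms(3) assms(4) R] .
  then show ?thesis
    by blast
qed

end

abbreviation (input) pointwise_scale :: "('k \<Rightarrow> 'v \<Rightarrow> 'v) \<Rightarrow> 'k \<Rightarrow> ('g \<Rightarrow> 'v) \<Rightarrow> 'g \<Rightarrow> 'v" where
  "pointwise_scale sc \<equiv> \<lambda>c x h. sc c (x h)"

lemma vector_space_pointwise:
  assumes "vector_space sc"
  shows "vector_space (pointwise_scale sc :: 'k::field \<Rightarrow> ('g \<Rightarrow> 'v::ab_group_add) \<Rightarrow> _)"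
proof -
  interpret V: vector_space sc by fact
  show ?thesis
    by unfold_locales (auto simp: fun_eq_iff V.scale_right_distrib V.scale_left_distrib)
qed

lemma linear_restr:
  assumes "vector_space sc"
  shows "Vector_Spaces.linear (pointwise_scale sc) (pointwise_scale sc) (restr A :: ('g \<Rightarrow> 'v::ab_group_add) \<Rightarrow> _)"
proof -
  interpret V: vector_space sc by fact
  show ?thesis
    using vector_space_pointwise[OF assms]
    by (auto simp: Vector_Spaces.linear_iff restr_def fun_eq_iff V.scale_right_distrib)
qed

lemma linear_shift:
  assumes "vector_space sc"
  shows "Vector_Spaces.linear (pointwise_scale sc) (pointwise_scale sc) (shift g :: ('g::group_add \<Rightarrow> 'v::ab_group_add) \<Rightarrow> _)"
  using vector_space_pointwise[OF assms] by (simp add: Vector_Spaces.linear_iff shift_def fun_eq_iff)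

lemma finite_support_in_span:
  fixes sc :: "'k::field \<Rightarrow> 'v::ab_group_add \<Rightarrow> 'v"
  assumes fd: "finite_dimensional_vector_space sc Bas" and C: "finite C"
  shows "\<exists>W. finite W \<and> {x :: 'g \<Rightarrow> 'v. \<forall>h. h \<notin> C \<longrightarrow> x h = 0}
                          \<subseteq> module.span (pointwise_scale sc) W"
proof -
  interpret V: finite_dimensional_vector_space sc Bas by fact
  interpret VF: vector_space "pointwise_scale sc :: 'k \<Rightarrow> ('g \<Rightarrow> 'v) \<Rightarrow> _"
    by (rule vector_space_pointwise) unfold_locales
  define delta where "delta a v = (\<lambda>h. if h = a then v else (0::'v))" for a :: 'g and v
  define W where "W = (\<lambda>(a, v). delta a v) ` (C \<times> Bas)"
  have "module_hom sc (pointwise_scale sc) (delta a)" for a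
    unfolding module_hom_iff using V.module_axioms VF.module_axioms
    by (auto simp: delta_def fun_eq_iff)
  then have delta_in_span: "delta a v \<in> VF.span W" if "a \<in> C" for a v
    using module_hom.span_image[of sc _ "delta a" Bas] V.span_Basis VF.span_mono[of "delta a ` Bas" W] that
    by (fastforce simp: W_def)
  have "x \<in> VF.span W" if x: "\<forall>h. h \<notin> C \<longrightarrow> x h = 0" for x
  proof -
    have sum_eq: "(\<Sum>a\<in>C. delta a (x a)) = x"
    proof
      fix h
      have "(\<Sum>a\<in>C. delta a (x a)) h = (\<Sum>a\<in>C. delta a (x a) h)"
        by (induction C rule: infinite_finite_induct) auto
      also have "\<dots> = x h"
        using x C by (simp add: delta_def sum.delta')
      finally show "(\<Sum>a\<in>C. delta a (x a)) h = x h" .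
    qed
    have "(\<Sum>a\<in>C. delta a (x a)) \<in> VF.span W"
      by (rule VF.span_sum) (rule delta_in_span)
    then show ?thesis
      by (simp only: sum_eq)
  qed
  moreover have "finite W"
    using C V.finite_Basis by (simp add: W_def)
  ultimately show ?thesis
    by blast
qed

lemma restr_restr: "A \<subseteq> B \<Longrightarrow> restr A (restr B x) = restr A x"
  by (auto simp: restr_def fun_eq_iff)

lemma restr_images_stabilize:
  fixes sc :: "'k::field \<Rightarrow> 'v::ab_group_add \<Rightarrow> 'v" and X :: "nat \<Rightarrow> ('g \<Rightarrow> 'v) set"
  assumes fd: "finite_dimensional_vector_space sc Bas" and A: "finite A"
    and X: "\<And>r. module.subspace (pointwise_scale sc) (X r)" "decseq X"
  shows "\<exists>R. \<forall>r\<ge>R. restr A ` X r = restr A ` X R"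
proof -
  interpret V: finite_dimensional_vector_space sc Bas by fact
  interpret VF: vector_space "pointwise_scale sc :: 'k \<Rightarrow> ('g \<Rightarrow> 'v) \<Rightarrow> _"
    by (rule vector_space_pointwise) unfold_locales
  obtain W where W: "finite W" "{x. \<forall>h. h \<notin> A \<longrightarrow> x h = 0} \<subseteq> VF.span W"
    using finite_support_in_span[OF fd A] by blast
  have hom: "module_hom (pointwise_scale sc) (pointwise_scale sc) (restr A :: ('g \<Rightarrow> 'v) \<Rightarrow> _)"
    using linear_restr[OF V.vector_space_axioms] by (simp add: linear_iff_module_hom)
  show ?thesis
  proof (rule VF.decseq_subspaces_stabilize)
    show "VF.subspace (restr A ` X r)" for r
      by (rule module_hom.subspace_image[OF hom X(1)])
    show "decseq (\<lambda>r. restr A ` X r)"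
      using decseqD[OF X(2)] by (intro decseq_SucI image_mono) simp
    show "restr A ` X r \<subseteq> VF.span W" for r
      using W(2) by (auto simp: restr_def)
  qed (fact W(1))
qed

lemma restr_compatible_glue:
  fixes C :: "nat \<Rightarrow> 'g set"
  assumes compat: "\<And>n m. n \<le> m \<Longrightarrow> restr (C n) (zs m) = zs n"
  shows "\<exists>y. \<forall>n. restr (C n) y = zs n"
proof -
  define y where "y h = zs (LEAST n. h \<in> C n) h" for h
  have "restr (C n) y h = zs n h" for n h
  proof (cases "h \<in> C n")
    case True
    define k where "k = (LEAST n. h \<in> C n)"
    have "k \<le> n"
      using True unfolding k_def by (rule Least_le)
    moreover have "h \<in> C k"
      using True unfolding k_def by (rule LeastI)
    ultimately have "zs k h = zs n h"
      using fun_cong[OF compat[of k n], of h] by (simp add: restr_def)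
    then show ?thesis
      using True by (simp add: restr_def y_def k_def)
  next
    case False
    then show ?thesis
      using compat[of n n] by (metis restr_def order_refl)
  qed
  then show ?thesis
    by blast
qed

lemma restr_inverse_limit:
  assumes C: "incseq C"
    and L_restr: "\<And>n z. z \<in> L n \<Longrightarrow> restr (C n) z = z"
    and z0: "z0 \<in> L 0"
    and lift: "\<And>n z. z \<in> L n \<Longrightarrow> \<exists>z'\<in>L (Suc n). restr (C n) z' = z"
  shows "\<exists>y. restr (C 0) y = z0 \<and> (\<forall>n. restr (C n) y \<in> L n)"
proof -
  have "\<exists>zs. \<forall>n. (zs n \<in> L n \<and> (n = 0 \<longrightarrow> zs n = z0)) \<and> restr (C n) (zs (Suc n)) = zs n"
    by (rule dependent_nat_choice) (use z0 lift in fastforce)+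
  then obtain zs where zs: "\<And>n. zs n \<in> L n" "zs 0 = z0"
    and zs_Suc: "\<And>n. restr (C n) (zs (Suc n)) = zs n"
    by blast
  have "restr (C n) (zs m) = zs n" if "n \<le> m" for n m
    using that
  proof (induction m rule: dec_induct)
    case base
    show ?case
      using zs(1) L_restr by blast
  next
    case (step m)
    have "restr (C n) (zs (Suc m)) = restr (C n) (restr (C m) (zs (Suc m)))"
      using restr_restr[OF incseqD[OF C step(1)], of "zs (Suc m)"] by simp
    then show ?case
      using zs_Suc step.IH by simp
  qed
  then obtain y where "\<And>n. restr (C n) y = zs n"
    using restr_compatible_glue by blast
  then show ?thesis
    using zs by metis
qed

lemma decseq_subspaces_common_limit:
  fixes sc :: "'k::field \<Rightarrow> 'v::ab_group_add \<Rightarrow> 'v" and X :: "nat \<Rightarrow> ('g \<Rightarrow> 'v) set"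
  assumes fd: "finite_dimensional_vector_space sc Bas"
    and C: "incseq C" "\<And>n. finite (C n)" "a \<in> C 0"
    and X: "\<And>r. module.subspace (pointwise_scale sc) (X r)" "decseq X"
    and nonzero: "\<And>r. \<exists>x\<in>X r. x a \<noteq> 0"
  shows "\<exists>y. y a \<noteq> 0 \<and> (\<forall>n r. \<exists>x\<in>X r. restr (C n) x = restr (C n) y)"
proof -
  define L where "L n r = restr (C n) ` X r" for n r
  obtain R where R: "\<And>n r. R n \<le> r \<Longrightarrow> L n r = L n (R n)"
    using restr_images_stabilize[OF fd C(2) X] unfolding L_def by metis
  have lift: "\<exists>z'\<in>L (Suc n) (R (Suc n)). restr (C n) z' = z" if "z \<in> L n (R n)" for n z
  proof -
    define r where "r = max (R n) (R (Suc n))"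
    have "z \<in> L n r"
      using that R[of n r] by (simp add: r_def)
    then obtain x where x: "x \<in> X r" "z = restr (C n) x"
      by (auto simp: L_def)
    have "restr (C (Suc n)) x \<in> L (Suc n) (R (Suc n))"
      using x(1) R[of "Suc n" r] by (auto simp: L_def r_def)
    moreover have "restr (C n) (restr (C (Suc n)) x) = z"
      using x(2) restr_restr incseq_SucD[OF C(1)] by metis
    ultimately show ?thesis
      by blast
  qed
  obtain x0 where x0: "x0 \<in> X (R 0)" "x0 a \<noteq> 0"
    using nonzero by blast
  have "\<exists>y. restr (C 0) y = restr (C 0) x0 \<and> (\<forall>n. restr (C n) y \<in> L n (R n))"
  proof (rule restr_inverse_limit[OF C(1)])
    show "restr (C n) z = z" if "z \<in> L n (R n)" for n z
      using that by (auto simp: L_def restr_restr)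
    show "restr (C 0) x0 \<in> L 0 (R 0)"
      using x0(1) by (simp add: L_def)
  qed (rule lift)
  then obtain y where y: "restr (C 0) y = restr (C 0) x0" "\<And>n. restr (C n) y \<in> L n (R n)"
    by blast
  have "y a \<noteq> 0"
    using fun_cong[OF y(1), of a] x0(2) C(3) by (simp add: restr_def)
  moreover have "\<exists>x\<in>X r. restr (C n) x = restr (C n) y" for n r
  proof -
    have "restr (C n) y \<in> L n (max r (R n))"
      using y(2)[of n] R[of n "max r (R n)"] by simp
    then show ?thesis
      using decseqD[OF X(2), of r "max r (R n)"] by (auto simp: L_def)
  qed
  ultimately show ?thesis
    by blast
qed

lemma module_hom_sigma_at:
  assumes "p g \<in> lin_maps sc M"
  shows "module_hom (pointwise_scale sc) sc (\<lambda>x. sigma M p x g)"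
proof -
  have lin: "Vector_Spaces.linear (pointwise_scale sc) sc (p g)"
    using assms by (simp add: lin_maps_def)
  then have "vector_space sc"
    by (simp add: Vector_Spaces.linear_iff)
  moreover have "(\<lambda>x. sigma M p x g) = p g \<circ> shift (- g)"
    using assms by (auto simp: sigma_def lin_maps_def)
  ultimately show ?thesis
    using Vector_Spaces.linear_compose[OF linear_shift lin] by (simp add: linear_iff_module_hom)
qed

lemma sigma_diff:
  assumes "p g \<in> lin_maps sc M"
  shows "sigma M p (x - y) g = sigma M p x g - sigma M p y g"
  using module_hom.diff[OF module_hom_sigma_at[of p g sc M, OF assms]] by simp

lemma sigma_zero:
  assumes "p g \<in> lin_maps sc M"
  shows "sigma M p 0 g = 0"
  using module_hom.zero[OF module_hom_sigma_at[of p g sc M, OF assms]] by simp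

lemma sigma_local:
  assumes "\<forall>m\<in>M. x (g + m) = y (g + m)"
  shows "sigma M p x g = sigma M p y g"
proof -
  have "restr M (shift (- g) x) = restr M (shift (- g) y)"
    using assms by (auto simp: restr_def shift_def fun_eq_iff)
  then show ?thesis
    by (simp add: sigma_def)
qed

lemma sigma_eq_if_restr_eq:
  assumes "(+) g ` M \<subseteq> A" and "restr A x = restr A y"
  shows "sigma M p x g = sigma M p y g"
proof (rule sigma_local, rule ballI)
  fix m assume "m \<in> M"
  then have "g + m \<in> A"
    using assms(1) by blast
  then show "x (g + m) = y (g + m)"
    using fun_cong[OF assms(2), of "g + m"] by (simp add: restr_def)
qed

lemma subspace_sigma_vanishing:
  fixes sc :: "'k::field \<Rightarrow> 'v::ab_group_add \<Rightarrow> 'v" and p :: "'g::group_add \<Rightarrow> ('g \<Rightarrow> 'v) \<Rightarrow> 'v"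
  assumes p: "\<And>g. p g \<in> lin_maps sc M"
  shows "module.subspace (pointwise_scale sc) {y. \<forall>h\<in>B. sigma M p y h = 0}"
proof -
  have hom: "module_hom (pointwise_scale sc) sc (\<lambda>y. sigma M p y h)" for h
    using module_hom_sigma_at[of p h sc M, OF p] .
  interpret VF: module "pointwise_scale sc :: 'k \<Rightarrow> ('g \<Rightarrow> 'v) \<Rightarrow> _"
    using hom[of 0] by (simp add: module_hom_def)
  have "VF.subspace (\<Inter>h\<in>B. {y. sigma M p y h = 0})"
    using module_hom.subspace_kernel[OF hom] by (intro VF.subspace_Int)
  then show ?thesis
    by (simp add: INTER_eq)
qed

lemma sigma_translate:
  "sigma M (\<lambda>h. p (g + h)) (\<lambda>h. x (g + h)) h = sigma M p x (g + h)"
  by (simp add: sigma_def shift_def add.assoc)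

(* For linear sigma M p this says that the inverse of sigma M p, on its image, has memory set N
   at the origin. *)
definition inverse_memory :: "'g::group_add set \<Rightarrow> ('g \<Rightarrow> ('g \<Rightarrow> 'v::zero) \<Rightarrow> 'v) \<Rightarrow> 'g set \<Rightarrow> bool" where
  "inverse_memory M p N \<longleftrightarrow> (\<forall>y. (\<forall>h\<in>N. sigma M p y h = 0) \<longrightarrow> y 0 = 0)"

lemma inverse_memory_mono: "inverse_memory M p N \<Longrightarrow> N \<subseteq> N' \<Longrightarrow> inverse_memory M p N'"
  unfolding inverse_memory_def by blast

lemma inverse_memory_cong:
  "(\<And>h. h \<in> N \<Longrightarrow> p h = q h) \<Longrightarrow> inverse_memory M p N \<longleftrightarrow> inverse_memory M q N"
  unfolding inverse_memory_def sigma_def by simp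

lemma inverse_memory_translate_eq:
  assumes p: "\<And>g. p g \<in> lin_maps sc M" and N: "inverse_memory M (\<lambda>h. p (g + h)) N"
    and agree: "\<And>n. n \<in> N \<Longrightarrow> sigma M p x (g + n) = sigma M p x' (g + n)"
  shows "x g = x' g"
proof -
  have "sigma M (\<lambda>h. p (g + h)) (\<lambda>h. (x - x') (g + h)) n = 0" if "n \<in> N" for n
  proof -
    have "sigma M (\<lambda>h. p (g + h)) (\<lambda>h. (x - x') (g + h)) n = sigma M p (x - x') (g + n)"
      by (rule sigma_translate)
    also have "\<dots> = 0"
      using agree[OF that] by (simp add: sigma_diff[OF p])
    finally show ?thesis .
  qed
  then have "(\<lambda>h. (x - x') (g + h)) 0 = 0"
    using N unfolding inverse_memory_def by blast
  then show ?thesis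
    by simp
qed

lemma inj_sigma_imp_inverse_memory:
  fixes sc :: "'k::field \<Rightarrow> 'v::ab_group_add \<Rightarrow> 'v" and p :: "'g::group_add \<Rightarrow> ('g \<Rightarrow> 'v) \<Rightarrow> 'v"
  assumes fd: "finite_dimensional_vector_space sc Bas"
    and cnt: "countable (UNIV :: 'g set)"
    and M: "finite M"
    and p: "\<And>g. p g \<in> lin_maps sc M"
    and inj: "inj (sigma M p)"
  shows "\<exists>N. finite N \<and> inverse_memory M p N"
proof (rule ccontr)
  assume no_memory: "\<not> ?thesis"
  define B where "B n = insert 0 (from_nat_into (UNIV :: 'g set) ` {..n})" for n
  \<comment> \<open>sigma at the points of B n only reads the window C n\<close>
  define C where "C n = B n \<union> (\<Union>b\<in>B n. (+) b ` M)" for n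
  define X where "X r = {y. \<forall>h\<in>B r. sigma M p y h = 0}" for r
  have "incseq B"
    by (rule incseq_SucI) (auto simp: B_def)
  then have "incseq C"
    unfolding incseq_def C_def by blast
  moreover have "finite (C n)" for n
    using M by (simp add: C_def B_def)
  moreover have "0 \<in> C 0"
    by (simp add: C_def B_def)
  moreover have "module.subspace (pointwise_scale sc) (X r)" for r
    unfolding X_def using p by (rule subspace_sigma_vanishing)
  moreover have "decseq X"
    by (rule decseq_SucI) (auto simp: X_def B_def)
  moreover have "\<exists>y\<in>X r. y 0 \<noteq> 0" for r
  proof -
    have "\<not> inverse_memory M p (B r)"
      using no_memory by (simp add: B_def)
    then show ?thesis
      by (auto simp: inverse_memory_def X_def)
  qed
  ultimately have "\<exists>y. y 0 \<noteq> 0 \<and> (\<forall>n r. \<exists>x\<in>X r. restr (C n) x = restr (C n) y)"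
    by (rule decseq_subspaces_common_limit[OF fd])
  then obtain y where y0: "y 0 \<noteq> 0"
    and approx: "\<And>n r. \<exists>x\<in>X r. restr (C n) x = restr (C n) y"
    by blast
  have "sigma M p y h = 0" for h
  proof -
    obtain n where h: "h \<in> B n"
      using from_nat_into_surj[OF cnt UNIV_I, of h] by (auto simp: B_def)
    obtain x where x: "x \<in> X n" "restr (C n) x = restr (C n) y"
      using approx by blast
    have "(+) h ` M \<subseteq> C n"
      using h by (auto simp: C_def)
    then have "sigma M p y h = sigma M p x h"
      using sigma_eq_if_restr_eq x(2) by metis
    then show ?thesis
      using x(1) h by (simp add: X_def)
  qed
  then have "sigma M p y = sigma M p 0"
    using sigma_zero[OF p] by auto
  then have "y = 0"
    by (rule injD[OF inj])
  then show False
    using y0 by simp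
qed

lemma uniform_inverse_memory:
  assumes E: "finite E" "\<And>g. g \<notin> E \<Longrightarrow> p g = c"
    and Nc: "finite Nc" "inverse_memory M (\<lambda>_. c) Nc"
    and translates: "\<And>g. \<exists>N. finite N \<and> inverse_memory M (\<lambda>h. p (g + h)) N"
  shows "\<exists>N. finite N \<and> (\<forall>g. inverse_memory M (\<lambda>h. p (g + h)) N)"
proof -
  obtain Ng where Ng: "\<And>g. finite (Ng g)" "\<And>g. inverse_memory M (\<lambda>h. p (g + h)) (Ng g)"
    using translates by metis
  define D where "D = (\<Union>h\<in>Nc. (\<lambda>e. e - h) ` E)"
  define N where "N = Nc \<union> (\<Union>g\<in>D. Ng g)"
  have "inverse_memory M (\<lambda>h. p (g + h)) N" for g
  proof (cases "g \<in> D")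
    case True
    show ?thesis
      by (rule inverse_memory_mono[OF Ng(2)]) (use True in \<open>auto simp: N_def\<close>)
  next
    case False
    have const_on_Nc: "p (g + h) = c" if "h \<in> Nc" for h
    proof (rule E(2), rule notI)
      assume "g + h \<in> E"
      moreover have "g = (g + h) - h"
        by (rule add_diff_cancel[symmetric])
      ultimately have "g \<in> (\<lambda>e. e - h) ` E"
        by (rule rev_image_eqI)
      then have "g \<in> D"
        using that unfolding D_def by blast
      then show False
        using False by blast
    qed
    then have "inverse_memory M (\<lambda>h. p (g + h)) Nc"
      using inverse_memory_cong[of Nc "\<lambda>h. p (g + h)" "\<lambda>_. c" M] const_on_Nc Nc(2) by simp
    then show ?thesis
      by (rule inverse_memory_mono) (auto simp: N_def)
  qed
  moreover have "finite N"
    using Nc(1) E(1) Ng(1) by (simp add: N_def D_def)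
  ultimately show ?thesis
    by blast
qed

theorem lemma4p1:
  fixes sc :: "'k::field \<Rightarrow> 'v::ab_group_add \<Rightarrow> 'v"
    and M :: "'g::group_add set"
    and s :: "'g \<Rightarrow> ('g \<Rightarrow> 'v) \<Rightarrow> 'v"
    and tau :: "('g \<Rightarrow> 'v) \<Rightarrow> ('g \<Rightarrow> 'v)"
  assumes fg: "finitely_generated_group TYPE('g)"
    and inf: "infinite (UNIV :: 'g set)"
    and fdim: "\<exists>B. finite_dimensional_vector_space sc B"
    and M: "finite M"
    and s_in: "\<And>g. s g \<in> lin_maps sc M"
    and s_const: "\<exists>E c. finite E \<and> (\<forall>g. g \<notin> E \<longrightarrow> s g = c)"
    and tau: "tau = sigma M s"
    and stinj: "stably_injective sc M s"
  shows "\<exists>N::'g set. finite N \<and>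
           (\<forall>d \<in> range tau. \<forall>d' \<in> range tau. \<forall>g.
              (\<forall>n \<in> N. d (g + n) = d' (g + n)) \<longrightarrow> inv tau d g = inv tau d' g)"
proof -
  obtain Bas where fd: "finite_dimensional_vector_space sc Bas"
    using fdim by blast
  obtain E c where E: "finite E" "\<And>g. g \<notin> E \<Longrightarrow> s g = c"
    using s_const by blast
  note memory = inj_sigma_imp_inverse_memory[OF fd countable_UNIV_if_finitely_generated[OF fg] M]
  have const: "(\<lambda>_. c) \<in> orbit_closure (lin_maps sc M) s"
    using const_in_orbit_closure[OF inf s_in E] .
  have "inj (sigma M (\<lambda>_. c))"
    using stinj const by (simp add: stably_injective_def)
  then obtain Nc where Nc: "finite Nc" "inverse_memory M (\<lambda>_. c) Nc"
    using memory[of "\<lambda>_. c"] orbit_closure_values[OF const] by auto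
  have inj_translate: "inj (sigma M (\<lambda>h. s (g + h)))" for g
    using stinj translate_in_orbit_closure[where s = s, OF s_in] by (simp add: stably_injective_def)
  then have translates: "\<exists>N. finite N \<and> inverse_memory M (\<lambda>h. s (g + h)) N" for g
    using memory[of "\<lambda>h. s (g + h)"] s_in by blast
  obtain N where N: "finite N" "\<And>g. inverse_memory M (\<lambda>h. s (g + h)) N"
    using uniform_inverse_memory[OF E Nc translates] by blast
  have inj: "inj tau"
    using inj_translate[of 0] tau by simp
  show ?thesis
  proof (intro exI[of _ N] conjI N(1) ballI allI impI)
    fix d d' g
    assume "d \<in> range tau" "d' \<in> range tau" and "\<forall>n\<in>N. d (g + n) = d' (g + n)"
    then obtain x x' where "d = tau x" "d' = tau x'" "\<And>n. n \<in> N \<Longrightarrow> tau x (g + n) = tau x' (g + n)"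
      by blast
    then show "inv tau d g = inv tau d' g"
      using inverse_memory_translate_eq[OF s_in N(2)] tau inj by simp
  qed
qed

end
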